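(* Let $\Delta,\Delta'$ be disjoint subsets of a finite alphabet $\Sigma$, and let $L\subseteq\Sigma^\omega$ be an aperiodic language such that each string in $L$ contains exactly one occurrence of a symbol from $\Delta$ and exactly one occurrence of a symbol from $\Delta'$. Then $L$ can be written as a finite union of disjoint languages $R_\ell\, a\, R_m\, b\, R_r$ where $(a,b)\in(\Delta\times\Delta')\cup(\Delta'\times\Delta)$, $R_\ell,R_m\subseteq(\Sigma\setminus(\Delta\cup\Delta'))^*$ and $R_r\subseteq(\Sigma\setminus(\Delta\cup\Delta'))^\omega$. Moreover $R_\ell$, $R_m$ and $R_r$ are aperiodic.
   Context: A finite monoid $M$ is aperiodic if there is $n$ with $x^n=x^{n+1}$ for all $x\in M$. A language $K\subseteq\Sigma^*$ is aperiodic if it is recognized by a morphism $h:\Sigma^*\to M$ to a finite aperiodic monoid (i.e. $K=h^{-1}(h(K))$). For $\omega$-languages: given a morphism $h:\Sigma^*\to M$ to a finite monoid, $\omega$-strings $u,v$ are $h$-similar if they factor as $u=u_1u_2\cdots$, $v=v_1v_2\cdots$ with $u_i,v_i\in\Sigma^+$ and $h(u_i)=h(v_i)$; let $\cong$ be its transitive closure; $h$ recognizes $L\subseteq\Sigma^\omega$ if $w\in L$ and $u\cong w$ imply $u\in L$; $L$ is aperiodic if recognized by a morphism to a finite aperiodic monoid. *)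

theory Defs
  imports "HOL-Algebra.Group" "HOL-Library.Omega_Words_Fun"
begin

text \<open>A finite aperiodic monoid. Monoids are represented with carrier of type nat
  (every finite monoid is isomorphic to one on a subset of nat).\<close>
definition finite_aperiodic_monoid :: "nat monoid \<Rightarrow> bool" where
  "finite_aperiodic_monoid M \<longleftrightarrow> monoid M \<and> finite (carrier M) \<and>
     (\<exists>n::nat. \<forall>x\<in>carrier M. x [^]\<^bsub>M\<^esub> n = x [^]\<^bsub>M\<^esub> (Suc n))"

definition word_morphism :: "('a list \<Rightarrow> nat) \<Rightarrow> nat monoid \<Rightarrow> bool" where
  "word_morphism h M \<longleftrightarrow> (\<forall>u. h u \<in> carrier M) \<and> h [] = \<one>\<^bsub>M\<^esub> \<and>
     (\<forall>u v. h (u @ v) = h u \<otimes>\<^bsub>M\<^esub> h v)"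

definition aperiodic_lang :: "'a list set \<Rightarrow> bool" where
  "aperiodic_lang K \<longleftrightarrow> (\<exists>(M::nat monoid) (h::'a list \<Rightarrow> nat).
     finite_aperiodic_monoid M \<and> word_morphism h M \<and> K = h -` (h ` K))"

text \<open>h-similarity of omega-words: factorizations u = u_0 u_1 ..., v = v_0 v_1 ...
  into nonempty finite words (cut points given by strictly increasing s, t starting at 0)
  with h(u_i) = h(v_i).\<close>
definition h_similar :: "('a list \<Rightarrow> nat) \<Rightarrow> 'a word \<Rightarrow> 'a word \<Rightarrow> bool" where
  "h_similar h u v \<longleftrightarrow> (\<exists>s t :: nat \<Rightarrow> nat. strict_mono s \<and> strict_mono t \<and> s 0 = 0 \<and> t 0 = 0 \<and>
     (\<forall>i. h (subsequence u (s i) (s (Suc i))) = h (subsequence v (t i) (t (Suc i)))))"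

definition recognizes_omega :: "('a list \<Rightarrow> nat) \<Rightarrow> 'a word set \<Rightarrow> bool" where
  "recognizes_omega h L \<longleftrightarrow> (\<forall>w u. w \<in> L \<and> (h_similar h)\<^sup>*\<^sup>* u w \<longrightarrow> u \<in> L)"

definition aperiodic_omega_lang :: "'a word set \<Rightarrow> bool" where
  "aperiodic_omega_lang L \<longleftrightarrow> (\<exists>(M::nat monoid) (h::'a list \<Rightarrow> nat).
     finite_aperiodic_monoid M \<and> word_morphism h M \<and> recognizes_omega h L)"

definition concat_lang :: "'a list set \<Rightarrow> 'a \<Rightarrow> 'a list set \<Rightarrow> 'a \<Rightarrow> 'a word set \<Rightarrow> 'a word set" where
  "concat_lang Rl a Rm b Rr = {conc (x @ [a] @ y @ [b]) z | x y z. x \<in> Rl \<and> y \<in> Rm \<and> z \<in> Rr}"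

end

theory Submission
  imports Defs
begin

text \<open>Fix a morphism h into a finite aperiodic monoid recognising L and let \<Gamma> be the unmarked
  letters. Every word of L factors uniquely as x a y b z with x, y \<in> \<Gamma>*, markers a, b and
  z \<in> \<Gamma>^\<omega>. Group the words of L by their type (h x, a, h y, b), of which there are finitely many.
  For a fixed type take R_l and R_m to be the h-fibres of h x and h y inside \<Gamma>*, and R_r the set
  of z \<in> \<Gamma>^\<omega> completing some prefix of that type into a word of L. As h recognises L, any prefix of
  the type may be used, so L is the disjoint union of these languages. The factors are aperiodic
  because they are recognised by h with a zero adjoined, to which every word leaving \<Gamma> is sent.\<close>

definition adjoin_zero :: "nat monoid \<Rightarrow> nat \<Rightarrow> nat monoid" where
  "adjoin_zero M z = \<lparr>carrier = insert z (carrier M),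
     mult = (\<lambda>x y. if x = z \<or> y = z then z else x \<otimes>\<^bsub>M\<^esub> y), one = \<one>\<^bsub>M\<^esub>\<rparr>"

lemma monoid_adjoin_zero:
  assumes "monoid M" "z \<notin> carrier M"
  shows "monoid (adjoin_zero M z)"
proof -
  interpret monoid M by fact
  show ?thesis
    by unfold_locales (use assms(2) in \<open>auto simp: adjoin_zero_def m_assoc\<close>)
qed

lemma nat_pow_adjoin_zero:
  assumes "monoid M" "z \<notin> carrier M" "x \<in> carrier M"
  shows "x [^]\<^bsub>adjoin_zero M z\<^esub> (n::nat) = x [^]\<^bsub>M\<^esub> n"
proof -
  interpret monoid M by fact
  show ?thesis using assms by (induct n) (auto simp: adjoin_zero_def)
qed

lemma nat_pow_adjoin_zero_zero: "z [^]\<^bsub>adjoin_zero M z\<^esub> (Suc n) = z"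
  by (induct n) (auto simp: adjoin_zero_def)

lemma finite_aperiodic_monoid_adjoin_zero:
  assumes "finite_aperiodic_monoid M" "z \<notin> carrier M"
  shows "finite_aperiodic_monoid (adjoin_zero M z)"
proof -
  interpret monoid M using assms(1) by (simp add: finite_aperiodic_monoid_def)
  obtain n where n: "\<And>x. x \<in> carrier M \<Longrightarrow> x [^]\<^bsub>M\<^esub> n = x [^]\<^bsub>M\<^esub> Suc n"
    using assms(1) unfolding finite_aperiodic_monoid_def by blast
  have "x [^]\<^bsub>adjoin_zero M z\<^esub> Suc n = x [^]\<^bsub>adjoin_zero M z\<^esub> Suc (Suc n)"
    if "x \<in> carrier (adjoin_zero M z)" for x
  proof (cases "x = z")
    case True
    then show ?thesis by (simp only: nat_pow_adjoin_zero_zero)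
  next
    case False
    then have "x \<in> carrier M" using that by (simp add: adjoin_zero_def)
    then have "x [^]\<^bsub>M\<^esub> Suc n = x [^]\<^bsub>M\<^esub> Suc (Suc n)"
      using n by (metis nat_pow_Suc)
    then show ?thesis
      by (simp only: nat_pow_adjoin_zero[OF monoid_axioms assms(2) \<open>x \<in> carrier M\<close>])
  qed
  moreover have "finite (carrier (adjoin_zero M z))"
    using assms(1) by (simp add: finite_aperiodic_monoid_def adjoin_zero_def)
  ultimately show ?thesis
    using monoid_adjoin_zero[OF monoid_axioms assms(2)]
    unfolding finite_aperiodic_monoid_def by blast
qed

definition restrict_morphism :: "('a list \<Rightarrow> nat) \<Rightarrow> 'a set \<Rightarrow> nat \<Rightarrow> 'a list \<Rightarrow> nat" where
  "restrict_morphism h G z w = (if w \<in> lists G then h w else z)"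

lemma word_morphism_restrict_morphism:
  assumes "word_morphism h M" "z \<notin> carrier M"
  shows "word_morphism (restrict_morphism h G z) (adjoin_zero M z)"
  using assms unfolding word_morphism_def restrict_morphism_def adjoin_zero_def
  by (auto; metis)

lemma restrict_aperiodic_morphism:
  assumes "finite_aperiodic_monoid M" "word_morphism h M"
  obtains z M' where "z \<notin> carrier M" "finite_aperiodic_monoid M'"
    "word_morphism (restrict_morphism h G z) M'"
proof -
  have "finite (carrier M)" using assms(1) by (simp add: finite_aperiodic_monoid_def)
  then obtain z where "z \<notin> carrier M" using ex_new_if_finite infinite_UNIV_nat by blast
  then show ?thesis
    using that finite_aperiodic_monoid_adjoin_zero[OF assms(1)]
      word_morphism_restrict_morphism[OF assms(2)] by blast
qed

lemma h_similar_restrict_morphismD: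
  assumes "word_morphism h M" "z \<notin> carrier M"
    and "h_similar (restrict_morphism h G z) u v" "range v \<subseteq> G"
  shows "range u \<subseteq> G" "h_similar h u v"
proof -
  obtain s t where st: "strict_mono s" "strict_mono t" "s 0 = 0" "t 0 = 0"
    and eq: "\<And>i. restrict_morphism h G z (u [s i \<rightarrow> s (Suc i)])
                  = restrict_morphism h G z (v [t i \<rightarrow> t (Suc i)])"
    using assms(3) unfolding h_similar_def by blast
  have h_ne_z: "h w \<noteq> z" for w
    using assms(1,2) unfolding word_morphism_def by metis
  have v_G: "v [a \<rightarrow> b] \<in> lists G" for a b
    using assms(4) by (auto simp: in_lists_conv_set)
  have u_G: "u [s i \<rightarrow> s (Suc i)] \<in> lists G" for i
    using eq[of i] v_G h_ne_z unfolding restrict_morphism_def by (auto split: if_splits)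
  show "range u \<subseteq> G"
  proof
    fix c assume "c \<in> range u"
    then obtain k where k: "c = u k" by blast
    have "idx_sequence s" using st by (simp add: idx_sequence_def strict_mono_Suc_iff)
    then obtain i where "k \<in> {s i ..< s (Suc i)}" using idx_sequence_interval by blast
    then show "c \<in> G" using u_G[of i] k by auto
  qed
  have "h (u [s i \<rightarrow> s (Suc i)]) = h (v [t i \<rightarrow> t (Suc i)])" for i
    using eq[of i] v_G u_G unfolding restrict_morphism_def by simp
  then show "h_similar h u v" unfolding h_similar_def using st by blast
qed

lemma h_similar_refl: "h_similar h u u"
  unfolding h_similar_def by (intro exI[of _ id]) (auto simp: strict_mono_def)

lemma subsequence_conc_shift: "(p \<frown> u) [length p + a \<rightarrow> length p + b] = u [a \<rightarrow> b]"
  by (rule nth_equalityI) auto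

lemma subsequence_conc_from_0: "(p \<frown> u) [0 \<rightarrow> length p + b] = p @ u [0 \<rightarrow> b]"
  by (rule nth_equalityI) (auto simp: nth_append)

text \<open>The first block of the new factorisations is the prefix followed by the old first block.\<close>
lemma h_similar_conc:
  assumes "word_morphism h M" "h_similar h u v" "h p = h q"
  shows "h_similar h (p \<frown> u) (q \<frown> v)"
proof -
  obtain s t where st: "strict_mono s" "strict_mono t" "s 0 = 0" "t 0 = 0"
    and eq: "\<And>i. h (u [s i \<rightarrow> s (Suc i)]) = h (v [t i \<rightarrow> t (Suc i)])"
    using assms(2) unfolding h_similar_def by blast
  define s' where "s' i = (if i = 0 then 0 else length p + s i)" for i
  define t' where "t' i = (if i = 0 then 0 else length q + t i)" for i
  have "strict_mono s'" "strict_mono t'"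
    unfolding s'_def t'_def using st by (auto simp: strict_mono_Suc_iff) (metis)+
  moreover have "h ((p \<frown> u) [s' i \<rightarrow> s' (Suc i)]) = h ((q \<frown> v) [t' i \<rightarrow> t' (Suc i)])" for i
  proof (cases i)
    case 0
    have "h (p @ u [0 \<rightarrow> s 1]) = h (q @ v [0 \<rightarrow> t 1])"
      using assms(1,3) eq[of 0] st(3,4) unfolding word_morphism_def by simp
    then show ?thesis
      using 0 by (simp add: s'_def t'_def subsequence_conc_from_0[where b = "s 1", simplified]
          subsequence_conc_from_0[where b = "t 1", simplified])
  next
    case (Suc j)
    then show ?thesis using eq by (simp add: s'_def t'_def subsequence_conc_shift)
  qed
  ultimately show ?thesis
    unfolding h_similar_def by (intro exI[of _ s'] exI[of _ t']) (auto simp: s'_def t'_def)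
qed

lemma recognizes_omega_conc:
  assumes "recognizes_omega h L" "word_morphism h M"
    and "h_similar h u v" "h p = h q" "q \<frown> v \<in> L"
  shows "p \<frown> u \<in> L"
  using assms h_similar_conc unfolding recognizes_omega_def by blast

definition fibre_lang :: "('a list \<Rightarrow> nat) \<Rightarrow> 'a set \<Rightarrow> nat \<Rightarrow> 'a list set" where
  "fibre_lang h G m = {x \<in> lists G. h x = m}"

definition residual_lang :: "'a word set \<Rightarrow> 'a set \<Rightarrow> 'a list set \<Rightarrow> 'a word set" where
  "residual_lang L G P = {z. range z \<subseteq> G \<and> (\<exists>p\<in>P. p \<frown> z \<in> L)}"

lemma aperiodic_lang_fibre_lang:
  assumes "finite_aperiodic_monoid M" "word_morphism h M"
  shows "aperiodic_lang (fibre_lang h G m)"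
proof -
  obtain z M' where z: "z \<notin> carrier M" and M': "finite_aperiodic_monoid M'"
    and h': "word_morphism (restrict_morphism h G z) M'"
    using restrict_aperiodic_morphism[OF assms] .
  have h_ne_z: "h w \<noteq> z" for w
    using assms(2) z unfolding word_morphism_def by metis
  have "fibre_lang h G m = restrict_morphism h G z -` {m}" if "fibre_lang h G m \<noteq> {}"
  proof -
    have "m \<noteq> z" using that h_ne_z unfolding fibre_lang_def by auto
    then show ?thesis unfolding fibre_lang_def restrict_morphism_def by (auto split: if_splits)
  qed
  then have "fibre_lang h G m =
      restrict_morphism h G z -` (restrict_morphism h G z ` fibre_lang h G m)"
    unfolding fibre_lang_def restrict_morphism_def by (cases "fibre_lang h G m = {}") auto
  then show ?thesis unfolding aperiodic_lang_def using M' h' by blast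
qed

lemma aperiodic_omega_lang_residual_lang:
  assumes "aperiodic_omega_lang L"
  shows "aperiodic_omega_lang (residual_lang L G P)"
proof -
  obtain M h where M: "finite_aperiodic_monoid M" and h: "word_morphism h M"
    and L: "recognizes_omega h L"
    using assms unfolding aperiodic_omega_lang_def by blast
  obtain z M' where z: "z \<notin> carrier M" and M': "finite_aperiodic_monoid M'"
    and h': "word_morphism (restrict_morphism h G z) M'"
    using restrict_aperiodic_morphism[OF M h] .
  have "u \<in> residual_lang L G P"
    if "(h_similar (restrict_morphism h G z))\<^sup>*\<^sup>* u w" "w \<in> residual_lang L G P" for u w
    using that
  proof (induction rule: converse_rtranclp_induct)
    case (step u v)
    then have "v \<in> residual_lang L G P" by blast
    then obtain p where v: "range v \<subseteq> G" "p \<in> P" "p \<frown> v \<in> L"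
      unfolding residual_lang_def by blast
    then have "range u \<subseteq> G" "h_similar h u v"
      using h_similar_restrict_morphismD[OF h z step.hyps(1)] by blast+
    then show ?case
      using recognizes_omega_conc[OF L h] v unfolding residual_lang_def by blast
  qed
  then have "recognizes_omega (restrict_morphism h G z) (residual_lang L G P)"
    unfolding recognizes_omega_def by blast
  then show ?thesis unfolding aperiodic_omega_lang_def using M' h' by blast
qed

lemma Least_not_in_conc_snoc:
  assumes "x \<in> lists G" "a \<notin> G"
  shows "(LEAST k. ((x @ [a]) \<frown> w) k \<notin> G) = length x"
proof (rule Least_equality)
  show "((x @ [a]) \<frown> w) (length x) \<notin> G" using assms(2) by simp
next
  fix k assume "((x @ [a]) \<frown> w) k \<notin> G"
  then show "length x \<le> k"
    using assms(1) by (cases "k < length x") (auto simp: nth_append in_lists_conv_set)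
qed

lemma conc_snoc_inject:
  assumes "x1 \<in> lists G" "x2 \<in> lists G" "a1 \<notin> G" "a2 \<notin> G"
    and "(x1 @ [a1]) \<frown> w1 = (x2 @ [a2]) \<frown> w2"
  shows "x1 = x2 \<and> a1 = a2 \<and> w1 = w2"
proof -
  have "length x1 = length x2"
    using Least_not_in_conc_snoc[OF assms(1,3), of w1] Least_not_in_conc_snoc[OF assms(2,4), of w2]
      assms(5) by simp
  then show ?thesis using assms(5) by auto
qed

lemma two_marker_inject:
  assumes "x1 \<in> lists G" "x2 \<in> lists G" "y1 \<in> lists G" "y2 \<in> lists G"
    and "a1 \<notin> G" "a2 \<notin> G" "b1 \<notin> G" "b2 \<notin> G"
    and "(x1 @ [a1] @ y1 @ [b1]) \<frown> z1 = (x2 @ [a2] @ y2 @ [b2]) \<frown> z2"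
  shows "x1 = x2 \<and> a1 = a2 \<and> y1 = y2 \<and> b1 = b2 \<and> z1 = z2"
proof -
  have "(x1 @ [a1]) \<frown> (y1 @ [b1]) \<frown> z1 = (x2 @ [a2]) \<frown> (y2 @ [b2]) \<frown> z2"
    using assms(9) by simp
  then have "x1 = x2 \<and> a1 = a2 \<and> (y1 @ [b1]) \<frown> z1 = (y2 @ [b2]) \<frown> z2"
    using conc_snoc_inject[OF assms(1,2,5,6)] by blast
  then show ?thesis using conc_snoc_inject[OF assms(3,4,7,8)] by blast
qed

lemma two_marker_split:
  assumes "D1 \<inter> D2 = {}" "\<exists>!k. w k \<in> D1" "\<exists>!k. w k \<in> D2"
  obtains x a y b z where "w = (x @ [a] @ y @ [b]) \<frown> z"
    "x \<in> lists (UNIV - (D1 \<union> D2))" "y \<in> lists (UNIV - (D1 \<union> D2))"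
    "range z \<subseteq> UNIV - (D1 \<union> D2)" "(a, b) \<in> (D1 \<times> D2) \<union> (D2 \<times> D1)"
proof -
  obtain k1 where k1: "w k1 \<in> D1" "\<And>k. w k \<in> D1 \<Longrightarrow> k = k1" using assms(2) by blast
  obtain k2 where k2: "w k2 \<in> D2" "\<And>k. w k \<in> D2 \<Longrightarrow> k = k2" using assms(3) by blast
  define p where "p = min k1 k2"
  define q where "q = max k1 k2"
  have "k1 \<noteq> k2" using k1(1) k2(1) assms(1) by blast
  then have pq: "p < q" "(w p, w q) \<in> (D1 \<times> D2) \<union> (D2 \<times> D1)"
    using k1(1) k2(1) by (auto simp: p_def q_def min_def max_def)
  have outside: "w k \<in> UNIV - (D1 \<union> D2)" if "k \<noteq> p" "k \<noteq> q" for k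
    using that k1(2)[of k] k2(2)[of k] by (auto simp: p_def q_def)
  have "w = prefix p w \<frown> suffix p w" by (rule prefix_suffix)
  also have "suffix p w = w p ## (subsequence w (Suc p) q \<frown> suffix q w)"
    using pq(1) by (simp add: Suc_leI)
  also have "suffix q w = w q ## suffix (Suc q) w" by simp
  finally have "w = (prefix p w @ [w p] @ w [Suc p \<rightarrow> q] @ [w q]) \<frown> suffix (Suc q) w"
    by (simp only: conc_conc[symmetric] build_cons conc_empty append.simps)
  moreover have "prefix p w \<in> lists (UNIV - (D1 \<union> D2))" "w [Suc p \<rightarrow> q] \<in> lists (UNIV - (D1 \<union> D2))"
    using outside pq(1) by (fastforce simp: in_lists_conv_set)+
  moreover have "range (suffix (Suc q) w) \<subseteq> UNIV - (D1 \<union> D2)"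
    using outside pq(1) by (fastforce simp: suffix_def)
  ultimately show ?thesis using that pq(2) by blast
qed

definition marked_words :: "'a list set \<Rightarrow> 'a \<Rightarrow> 'a list set \<Rightarrow> 'a \<Rightarrow> 'a list set" where
  "marked_words A a B b = {x @ [a] @ y @ [b] | x y. x \<in> A \<and> y \<in> B}"

lemma concat_lang_eq_conc: "concat_lang A a B b R = {p \<frown> z | p z. p \<in> marked_words A a B b \<and> z \<in> R}"
  unfolding concat_lang_def marked_words_def by blast

lemma conc_residual_lang_subset:
  assumes "recognizes_omega h L" "word_morphism h M" "\<And>p q. p \<in> P \<Longrightarrow> q \<in> P \<Longrightarrow> h p = h q"
  shows "{p \<frown> z | p z. p \<in> P \<and> z \<in> residual_lang L G P} \<subseteq> L"
  using recognizes_omega_conc[OF assms(1,2) h_similar_refl] assms(3)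
  unfolding residual_lang_def by blast

lemma marked_words_fibre_lang_eq:
  assumes "word_morphism h M" "p \<in> marked_words (fibre_lang h G m1) a (fibre_lang h G m2) b"
    "q \<in> marked_words (fibre_lang h G m1) a (fibre_lang h G m2) b"
  shows "h p = h q"
proof -
  have h_append: "h (u @ v) = h u \<otimes>\<^bsub>M\<^esub> h v" for u v
    using assms(1) unfolding word_morphism_def by blast
  obtain x y x' y' where "p = x @ [a] @ y @ [b]" "q = x' @ [a] @ y' @ [b]" "h x = h x'" "h y = h y'"
    using assms(2,3) unfolding marked_words_def fibre_lang_def by auto
  then show ?thesis by (simp only: h_append)
qed

lemma concat_lang_fibre_lang_disjoint:
  assumes "a \<notin> G" "b \<notin> G" "a' \<notin> G" "b' \<notin> G" "(m1, a, m2, b) \<noteq> (m1', a', m2', b')"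
  shows "disjnt (concat_lang (fibre_lang h G m1) a (fibre_lang h G m2) b R)
                (concat_lang (fibre_lang h G m1') a' (fibre_lang h G m2') b' R')"
  unfolding disjnt_iff
proof (intro allI notI, elim conjE)
  fix w assume "w \<in> concat_lang (fibre_lang h G m1) a (fibre_lang h G m2) b R"
    and "w \<in> concat_lang (fibre_lang h G m1') a' (fibre_lang h G m2') b' R'"
  then obtain x y z x' y' z' where
    "w = (x @ [a] @ y @ [b]) \<frown> z" "x \<in> lists G" "h x = m1" "y \<in> lists G" "h y = m2"
    "w = (x' @ [a'] @ y' @ [b']) \<frown> z'" "x' \<in> lists G" "h x' = m1'" "y' \<in> lists G" "h y' = m2'"
    unfolding concat_lang_def fibre_lang_def by blast
  then show False using two_marker_inject[of x G x' y y' a a' b b' z z'] assms by auto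
qed

definition factorization_lang :: "'a list set \<times> 'a \<times> 'a list set \<times> 'a \<times> 'a word set \<Rightarrow> 'a word set" where
  "factorization_lang = (\<lambda>(A, a, B, b, R). concat_lang A a B b R)"

definition type_factors :: "('a list \<Rightarrow> nat) \<Rightarrow> 'a set \<Rightarrow> 'a word set \<Rightarrow> nat \<times> 'a \<times> nat \<times> 'a
    \<Rightarrow> 'a list set \<times> 'a \<times> 'a list set \<times> 'a \<times> 'a word set" where
  "type_factors h G L = (\<lambda>(m1, a, m2, b). (fibre_lang h G m1, a, fibre_lang h G m2, b,
     residual_lang L G (marked_words (fibre_lang h G m1) a (fibre_lang h G m2) b)))"

lemma factorization_lang_type_factors_subset:
  assumes "recognizes_omega h L" "word_morphism h M"
  shows "factorization_lang (type_factors h G L t) \<subseteq> L"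
proof -
  obtain m1 a m2 b where t: "t = (m1, a, m2, b)" by (cases t) auto
  show ?thesis
    using conc_residual_lang_subset[OF assms marked_words_fibre_lang_eq[OF assms(2)]]
    unfolding t factorization_lang_def type_factors_def concat_lang_eq_conc by simp
qed

lemma conc_mem_factorization_lang_type_factors:
  assumes "x \<in> lists G" "y \<in> lists G" "range z \<subseteq> G" "(x @ [a] @ y @ [b]) \<frown> z \<in> L"
  shows "(x @ [a] @ y @ [b]) \<frown> z \<in> factorization_lang (type_factors h G L (h x, a, h y, b))"
proof -
  have "z \<in> residual_lang L G (marked_words (fibre_lang h G (h x)) a (fibre_lang h G (h y)) b)"
    using assms unfolding residual_lang_def marked_words_def fibre_lang_def by blast
  moreover have "x \<in> fibre_lang h G (h x)" "y \<in> fibre_lang h G (h y)"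
    using assms(1,2) unfolding fibre_lang_def by simp_all
  ultimately show ?thesis
    unfolding factorization_lang_def type_factors_def concat_lang_def by auto
qed

definition marker_types :: "nat monoid \<Rightarrow> 'a set \<Rightarrow> 'a set \<Rightarrow> (nat \<times> 'a \<times> nat \<times> 'a) set" where
  "marker_types M \<Delta> \<Delta>' = {(m1, a, m2, b). m1 \<in> carrier M \<and> m2 \<in> carrier M \<and>
     (a, b) \<in> (\<Delta> \<times> \<Delta>') \<union> (\<Delta>' \<times> \<Delta>)}"

lemma finite_marker_types:
  assumes "finite (carrier M)" "finite \<Delta>" "finite \<Delta>'"
  shows "finite (marker_types M \<Delta> \<Delta>')"
proof -
  have "finite (carrier M \<times> (\<Delta> \<union> \<Delta>') \<times> carrier M \<times> (\<Delta> \<union> \<Delta>'))" using assms by simp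
  then show ?thesis by (rule finite_subset[rotated]) (auto simp: marker_types_def)
qed

lemma Union_factorization_lang_type_factors:
  assumes "\<Delta> \<inter> \<Delta>' = {}" "word_morphism h M" "recognizes_omega h L"
    and "\<forall>w\<in>L. (\<exists>!k. w k \<in> \<Delta>) \<and> (\<exists>!k. w k \<in> \<Delta>')"
  shows "\<Union>(factorization_lang ` type_factors h (UNIV - (\<Delta> \<union> \<Delta>')) L ` marker_types M \<Delta> \<Delta>') = L"
    (is "\<Union>(factorization_lang ` ?F ` ?T) = L")
proof (intro equalityI subsetI)
  fix w assume "w \<in> L"
  then have "\<exists>!k. w k \<in> \<Delta>" "\<exists>!k. w k \<in> \<Delta>'" using assms(4) by auto
  then obtain x a y b z where w: "w = (x @ [a] @ y @ [b]) \<frown> z"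
    "x \<in> lists (UNIV - (\<Delta> \<union> \<Delta>'))" "y \<in> lists (UNIV - (\<Delta> \<union> \<Delta>'))"
    "range z \<subseteq> UNIV - (\<Delta> \<union> \<Delta>')" "(a, b) \<in> (\<Delta> \<times> \<Delta>') \<union> (\<Delta>' \<times> \<Delta>)"
    by (rule two_marker_split[OF assms(1)])
  have "(h x, a, h y, b) \<in> ?T" using assms(2) w(5) unfolding marker_types_def word_morphism_def by blast
  moreover have "w \<in> factorization_lang (?F (h x, a, h y, b))"
    using conc_mem_factorization_lang_type_factors[OF w(2-4)] \<open>w \<in> L\<close> w(1) by simp
  ultimately show "w \<in> \<Union>(factorization_lang ` ?F ` ?T)" by blast
next
  fix w assume "w \<in> \<Union>(factorization_lang ` ?F ` ?T)"
  then show "w \<in> L" using factorization_lang_type_factors_subset[OF assms(3,2)] by blast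
qed

lemma pairwise_disjnt_factorization_lang_type_factors:
  assumes "\<And>m1 a m2 b. (m1, a, m2, b) \<in> T \<Longrightarrow> a \<notin> G \<and> b \<notin> G"
  shows "pairwise (\<lambda>s t. disjnt (factorization_lang s) (factorization_lang t)) (type_factors h G L ` T)"
proof (rule pairwiseI)
  fix s t assume "s \<in> type_factors h G L ` T" "t \<in> type_factors h G L ` T" "s \<noteq> t"
  then obtain \<tau> \<tau>' where "\<tau> \<in> T" "\<tau>' \<in> T" "s = type_factors h G L \<tau>" "t = type_factors h G L \<tau>'"
    by blast
  moreover obtain m1 a m2 b m1' a' m2' b' where "\<tau> = (m1, a, m2, b)" "\<tau>' = (m1', a', m2', b')"
    by (metis prod_cases4)
  ultimately have T: "(m1, a, m2, b) \<in> T" "(m1', a', m2', b') \<in> T"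
    and st: "s = type_factors h G L (m1, a, m2, b)" "t = type_factors h G L (m1', a', m2', b')"
    by simp_all
  then have "(m1, a, m2, b) \<noteq> (m1', a', m2', b')" using \<open>s \<noteq> t\<close> by blast
  moreover have "a \<notin> G" "b \<notin> G" "a' \<notin> G" "b' \<notin> G" using T assms by blast+
  ultimately show "disjnt (factorization_lang s) (factorization_lang t)"
    unfolding st type_factors_def factorization_lang_def
    by (simp add: concat_lang_fibre_lang_disjoint)
qed

lemma type_factors_aperiodic:
  assumes "finite_aperiodic_monoid M" "word_morphism h M" "aperiodic_omega_lang L"
    and "type_factors h G L (m1, a, m2, b) = (A, a', B, b', R)"
  shows "A \<subseteq> lists G \<and> B \<subseteq> lists G \<and> (\<forall>z\<in>R. range z \<subseteq> G) \<and>
    aperiodic_lang A \<and> aperiodic_lang B \<and> aperiodic_omega_lang R"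
proof -
  have A: "A = fibre_lang h G m1" and B: "B = fibre_lang h G m2"
    and R: "R = residual_lang L G (marked_words A a B b)"
    using assms(4) unfolding type_factors_def by auto
  show ?thesis
    unfolding A B R
    using aperiodic_lang_fibre_lang[OF assms(1,2)] aperiodic_omega_lang_residual_lang[OF assms(3)]
    by (auto simp: fibre_lang_def residual_lang_def)
qed

lemma two_marker_factorization:
  fixes \<Delta> \<Delta>' :: "'a::finite set" and L :: "'a word set"
  assumes "\<Delta> \<inter> \<Delta>' = {}" "aperiodic_omega_lang L"
    and "\<forall>w\<in>L. (\<exists>!k. w k \<in> \<Delta>) \<and> (\<exists>!k. w k \<in> \<Delta>')"
  obtains \<T> where "finite \<T>" "L = \<Union>(factorization_lang ` \<T>)"
    "pairwise (\<lambda>s t. disjnt (factorization_lang s) (factorization_lang t)) \<T>"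
    "\<And>A a B b R. (A, a, B, b, R) \<in> \<T> \<Longrightarrow> (a, b) \<in> (\<Delta> \<times> \<Delta>') \<union> (\<Delta>' \<times> \<Delta>) \<and>
       A \<subseteq> lists (UNIV - (\<Delta> \<union> \<Delta>')) \<and> B \<subseteq> lists (UNIV - (\<Delta> \<union> \<Delta>')) \<and>
       (\<forall>z\<in>R. range z \<subseteq> UNIV - (\<Delta> \<union> \<Delta>')) \<and>
       aperiodic_lang A \<and> aperiodic_lang B \<and> aperiodic_omega_lang R"
proof -
  obtain M h where M: "finite_aperiodic_monoid M" and h: "word_morphism h M"
    and L: "recognizes_omega h L"
    using assms(2) unfolding aperiodic_omega_lang_def by blast
  let ?G = "UNIV - (\<Delta> \<union> \<Delta>')"
  let ?T = "marker_types M \<Delta> \<Delta>'"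
  have "finite (type_factors h ?G L ` ?T)"
    using M by (simp add: finite_aperiodic_monoid_def finite_marker_types)
  moreover have "L = \<Union>(factorization_lang ` type_factors h ?G L ` ?T)"
    using Union_factorization_lang_type_factors[OF assms(1) h L assms(3)] by simp
  moreover have "pairwise (\<lambda>s t. disjnt (factorization_lang s) (factorization_lang t))
      (type_factors h ?G L ` ?T)"
    by (rule pairwise_disjnt_factorization_lang_type_factors) (auto simp: marker_types_def)
  moreover have "(a, b) \<in> (\<Delta> \<times> \<Delta>') \<union> (\<Delta>' \<times> \<Delta>) \<and> A \<subseteq> lists ?G \<and> B \<subseteq> lists ?G \<and>
       (\<forall>z\<in>R. range z \<subseteq> ?G) \<and> aperiodic_lang A \<and> aperiodic_lang B \<and> aperiodic_omega_lang R"
    if AR: "(A, a, B, b, R) \<in> type_factors h ?G L ` ?T" for A a B b R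
  proof -
    obtain \<tau> where "\<tau> \<in> ?T" "type_factors h ?G L \<tau> = (A, a, B, b, R)" using AR by auto
    moreover obtain m1 a' m2 b' where "\<tau> = (m1, a', m2, b')" by (metis prod_cases4)
    ultimately have "(m1, a, m2, b) \<in> ?T" "type_factors h ?G L (m1, a, m2, b) = (A, a, B, b, R)"
      by (auto simp: type_factors_def)
    then show ?thesis
      using type_factors_aperiodic[OF M h assms(2)] unfolding marker_types_def by auto
  qed
  ultimately show ?thesis by (rule that)
qed

theorem mainTheorem7:
  fixes \<Delta> \<Delta>' :: "'a::finite set" and L :: "'a word set"
  assumes "\<Delta> \<inter> \<Delta>' = {}"
    and "aperiodic_omega_lang L"
    and "\<forall>w\<in>L. (\<exists>!k. w k \<in> \<Delta>) \<and> (\<exists>!k. w k \<in> \<Delta>')"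
  shows "\<exists>(n::nat) (Rl :: nat \<Rightarrow> 'a list set) (a :: nat \<Rightarrow> 'a) (Rm :: nat \<Rightarrow> 'a list set)
            (b :: nat \<Rightarrow> 'a) (Rr :: nat \<Rightarrow> 'a word set).
     L = (\<Union>i<n. concat_lang (Rl i) (a i) (Rm i) (b i) (Rr i)) \<and>
     (\<forall>i<n. \<forall>j<n. i \<noteq> j \<longrightarrow>
        concat_lang (Rl i) (a i) (Rm i) (b i) (Rr i) \<inter> concat_lang (Rl j) (a j) (Rm j) (b j) (Rr j) = {}) \<and>
     (\<forall>i<n. (a i, b i) \<in> (\<Delta> \<times> \<Delta>') \<union> (\<Delta>' \<times> \<Delta>) \<and>
        Rl i \<subseteq> lists (UNIV - (\<Delta> \<union> \<Delta>')) \<and> Rm i \<subseteq> lists (UNIV - (\<Delta> \<union> \<Delta>')) \<and>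
        (\<forall>z\<in>Rr i. range z \<subseteq> UNIV - (\<Delta> \<union> \<Delta>')) \<and>
        aperiodic_lang (Rl i) \<and> aperiodic_lang (Rm i) \<and> aperiodic_omega_lang (Rr i))"
proof -
  obtain \<T> where fin: "finite \<T>" and L: "L = \<Union>(factorization_lang ` \<T>)"
    and disj: "pairwise (\<lambda>s t. disjnt (factorization_lang s) (factorization_lang t)) \<T>"
    and factors: "\<And>A a B b R. (A, a, B, b, R) \<in> \<T> \<Longrightarrow> (a, b) \<in> (\<Delta> \<times> \<Delta>') \<union> (\<Delta>' \<times> \<Delta>) \<and>
       A \<subseteq> lists (UNIV - (\<Delta> \<union> \<Delta>')) \<and> B \<subseteq> lists (UNIV - (\<Delta> \<union> \<Delta>')) \<and>
       (\<forall>z\<in>R. range z \<subseteq> UNIV - (\<Delta> \<union> \<Delta>')) \<and>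
       aperiodic_lang A \<and> aperiodic_lang B \<and> aperiodic_omega_lang R"
    using two_marker_factorization[OF assms] by blast
  obtain n :: nat and f where \<T>: "\<T> = f ` {..<n}" and f: "inj_on f {..<n}"
    using finite_imp_nat_seg_image_inj_on[OF fin] unfolding lessThan_def by blast
  define Rl a Rm b Rr where "Rl = fst \<circ> f" and "a = fst \<circ> snd \<circ> f" and "Rm = fst \<circ> snd \<circ> snd \<circ> f"
    and "b = fst \<circ> snd \<circ> snd \<circ> snd \<circ> f" and "Rr = snd \<circ> snd \<circ> snd \<circ> snd \<circ> f"
  have f_eq: "f i = (Rl i, a i, Rm i, b i, Rr i)" for i
    by (simp add: Rl_def a_def Rm_def b_def Rr_def)
  have lang: "concat_lang (Rl i) (a i) (Rm i) (b i) (Rr i) = factorization_lang (f i)" for i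
    by (simp add: f_eq factorization_lang_def)
  show ?thesis
  proof (intro exI conjI)
    show "L = (\<Union>i<n. concat_lang (Rl i) (a i) (Rm i) (b i) (Rr i))"
      unfolding lang L \<T> by simp
    show "\<forall>i<n. \<forall>j<n. i \<noteq> j \<longrightarrow> concat_lang (Rl i) (a i) (Rm i) (b i) (Rr i) \<inter>
        concat_lang (Rl j) (a j) (Rm j) (b j) (Rr j) = {}"
      using disj f unfolding lang \<T> pairwise_def inj_on_def disjnt_def by blast
    show "\<forall>i<n. (a i, b i) \<in> (\<Delta> \<times> \<Delta>') \<union> (\<Delta>' \<times> \<Delta>) \<and>
        Rl i \<subseteq> lists (UNIV - (\<Delta> \<union> \<Delta>')) \<and> Rm i \<subseteq> lists (UNIV - (\<Delta> \<union> \<Delta>')) \<and>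
        (\<forall>z\<in>Rr i. range z \<subseteq> UNIV - (\<Delta> \<union> \<Delta>')) \<and>
        aperiodic_lang (Rl i) \<and> aperiodic_lang (Rm i) \<and> aperiodic_omega_lang (Rr i)"
      using factors f_eq unfolding \<T> by (metis imageI lessThan_iff)
  qed
qed

end
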